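(* For every integer $n\ge 3$ with $n\equiv 2\pmod 4$, $\gamma_t(C_n\times C_4)\le\gamma_p(C_n\times C_4)\le n+2$.
   Context: All graphs are finite, simple and undirected. $C_n$ denotes the cycle of order $n$ and $G\times H$ the Cartesian product of graphs. For a graph $G$ without isolated vertices: a set $D\subseteq V(G)$ is a total dominating set if every vertex of $G$ (including those in $D$) has a neighbour in $D$; $\gamma_t(G)$ is the minimum size of a total dominating set. A set $D\subseteq V(G)$ is a paired dominating set if every vertex outside $D$ has a neighbour in $D$ and the induced subgraph $G[D]$ has a perfect matching; $\gamma_p(G)$ is the minimum size of a paired dominating set. *)

theory Defs
  imports Main
begin

text \<open>A finite simple graph is given by a vertex set V and a symmetric,
irreflexive adjacency relation E (only its restriction to V matters).\<close>

definition cycle_adj :: "nat \<Rightarrow> nat \<Rightarrow> nat \<Rightarrow> bool" where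
  "cycle_adj n i j \<longleftrightarrow> i < n \<and> j < n \<and> (j = (i + 1) mod n \<or> i = (j + 1) mod n)"

definition cycle_verts :: "nat \<Rightarrow> nat set" where
  "cycle_verts n = {..<n}"

definition cart_verts :: "'a set \<Rightarrow> 'b set \<Rightarrow> ('a \<times> 'b) set" where
  "cart_verts V W = V \<times> W"

definition cart_adj ::
  "('a \<Rightarrow> 'a \<Rightarrow> bool) \<Rightarrow> ('b \<Rightarrow> 'b \<Rightarrow> bool) \<Rightarrow> 'a \<times> 'b \<Rightarrow> 'a \<times> 'b \<Rightarrow> bool" where
  "cart_adj E F p q \<longleftrightarrow>
     (fst p = fst q \<and> F (snd p) (snd q)) \<or> (snd p = snd q \<and> E (fst p) (fst q))"

definition total_dominating :: "'a set \<Rightarrow> ('a \<Rightarrow> 'a \<Rightarrow> bool) \<Rightarrow> 'a set \<Rightarrow> bool" where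
  "total_dominating V E D \<longleftrightarrow> D \<subseteq> V \<and> (\<forall>v\<in>V. \<exists>u\<in>D. E v u)"

definition perfect_matching_induced :: "('a \<Rightarrow> 'a \<Rightarrow> bool) \<Rightarrow> 'a set \<Rightarrow> 'a set set \<Rightarrow> bool" where
  "perfect_matching_induced E D M \<longleftrightarrow>
     (\<forall>e\<in>M. \<exists>u v. e = {u, v} \<and> u \<in> D \<and> v \<in> D \<and> u \<noteq> v \<and> E u v) \<and>
     (\<forall>e\<in>M. \<forall>f\<in>M. e \<noteq> f \<longrightarrow> e \<inter> f = {}) \<and>
     \<Union>M = D"

definition paired_dominating :: "'a set \<Rightarrow> ('a \<Rightarrow> 'a \<Rightarrow> bool) \<Rightarrow> 'a set \<Rightarrow> bool" where
  "paired_dominating V E D \<longleftrightarrow> D \<subseteq> V \<and> (\<forall>v\<in>V - D. \<exists>u\<in>D. E v u) \<and>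
     (\<exists>M. perfect_matching_induced E D M)"

definition gamma_t :: "'a set \<Rightarrow> ('a \<Rightarrow> 'a \<Rightarrow> bool) \<Rightarrow> nat" where
  "gamma_t V E = Min {card D | D. total_dominating V E D}"

definition gamma_p :: "'a set \<Rightarrow> ('a \<Rightarrow> 'a \<Rightarrow> bool) \<Rightarrow> nat" where
  "gamma_p V E = Min {card D | D. paired_dominating V E D}"

end

theory Submission
  imports Defs
begin

text \<open>Every paired dominating set is total dominating, since each of its vertices is dominated
by its partner; hence \<open>\<gamma>\<^sub>t \<le> \<gamma>\<^sub>p\<close>. For the upper bound, take a vertical edge of \<open>C\<^sub>4\<close> in every
even column \<open>i\<close> of \<open>C\<^sub>n \<times> C\<^sub>4\<close>, in rows \<open>{0,1}\<close> if \<open>4 dvd i\<close> and in rows \<open>{2,3}\<close> otherwise.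
Each odd column then lies between pairs in complementary rows and is dominated horizontally,
except column \<open>n - 1\<close>: as \<open>n \<equiv> 2 (mod 4)\<close>, both of its neighbours \<open>n - 2\<close> and \<open>0\<close> use rows
\<open>{0,1}\<close>, so it receives its own pair in rows \<open>{2,3}\<close>. These \<open>n/2 + 1\<close> pairs give \<open>n + 2\<close> vertices.\<close>

lemma paired_dominating_imp_total_dominating:
  assumes "symp E" and "paired_dominating V E D"
  shows "total_dominating V E D"
proof -
  obtain M where sub: "D \<subseteq> V" and dom: "\<forall>v\<in>V - D. \<exists>u\<in>D. E v u"
    and M: "perfect_matching_induced E D M"
    using assms(2) unfolding paired_dominating_def by blast
  have "\<exists>u\<in>D. E v u" if "v \<in> D" for v
  proof -
    obtain e where "e \<in> M" "v \<in> e"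
      using M \<open>v \<in> D\<close> unfolding perfect_matching_induced_def by blast
    moreover from this obtain a b where "e = {a, b}" "a \<in> D" "b \<in> D" "E a b"
      using M unfolding perfect_matching_induced_def by blast
    ultimately show ?thesis
      using \<open>symp E\<close> by (auto dest: sympD)
  qed
  with sub dom show ?thesis
    unfolding total_dominating_def by blast
qed

lemma finite_cards_of_subsets:
  assumes "finite V" and "\<And>D. P D \<Longrightarrow> D \<subseteq> V"
  shows "finite {card D | D. P D}"
proof (rule finite_subset)
  show "{card D | D. P D} \<subseteq> card ` Pow V"
    using assms(2) by blast
qed (use assms(1) in simp)

lemma gamma_p_le_card:
  assumes "finite V" and "paired_dominating V E D"
  shows "gamma_p V E \<le> card D"
  unfolding gamma_p_def
proof (rule Min_le)
  show "finite {card D | D. paired_dominating V E D}"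
    using assms(1) by (rule finite_cards_of_subsets) (simp add: paired_dominating_def)
qed (use assms(2) in blast)

lemma gamma_t_le_gamma_p:
  assumes "finite V" and "symp E" and "paired_dominating V E D"
  shows "gamma_t V E \<le> gamma_p V E"
  unfolding gamma_t_def gamma_p_def
proof (rule Min_antimono)
  show "{card D | D. paired_dominating V E D} \<subseteq> {card D | D. total_dominating V E D}"
    using paired_dominating_imp_total_dominating[OF \<open>symp E\<close>] by blast
  show "finite {card D | D. total_dominating V E D}"
    using \<open>finite V\<close> by (rule finite_cards_of_subsets) (simp add: total_dominating_def)
qed (use assms(3) in blast)

lemma symp_cycle_adj: "symp (cycle_adj n)"
  by (auto simp: symp_def cycle_adj_def)

lemma symp_cart_adj: "symp E \<Longrightarrow> symp F \<Longrightarrow> symp (cart_adj E F)"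
  by (auto simp: symp_def cart_adj_def)

lemma finite_cart_verts_cycle: "finite (cart_verts (cycle_verts n) (cycle_verts m))"
  by (simp add: cart_verts_def cycle_verts_def)

definition column_pairs :: "'a set \<Rightarrow> ('a \<Rightarrow> 'b) \<Rightarrow> ('a \<Rightarrow> 'b) \<Rightarrow> ('a \<times> 'b) set set" where
  "column_pairs I a b = (\<lambda>i. {(i, a i), (i, b i)}) ` I"

lemma perfect_matching_column_pairs:
  assumes "\<And>i. i \<in> I \<Longrightarrow> F (a i) (b i) \<and> a i \<noteq> b i"
  shows "perfect_matching_induced (cart_adj E F) (\<Union>(column_pairs I a b)) (column_pairs I a b)"
  using assms unfolding perfect_matching_induced_def column_pairs_def cart_adj_def
  by fastforce

lemma card_Union_column_pairs:
  assumes "finite I"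
  shows "card (\<Union>(column_pairs I a b)) \<le> 2 * card I"
proof -
  have "card (\<Union>(column_pairs I a b)) \<le> (\<Sum>i\<in>I. card {(i, a i), (i, b i)})"
    unfolding column_pairs_def by (rule card_UN_le[OF assms])
  also have "\<dots> \<le> (\<Sum>i\<in>I. 2)"
    by (intro sum_mono) (simp add: card_insert_if)
  finally show ?thesis by simp
qed

lemma mem_Union_column_pairs:
  "(i, j) \<in> \<Union>(column_pairs I a b) \<longleftrightarrow> i \<in> I \<and> (j = a i \<or> j = b i)"
  by (auto simp: column_pairs_def)

lemma cart_cycle_adj_vertical:
  assumes "i < n" "j < m" "j' < m" "j' = Suc j mod m \<or> j = Suc j' mod m"
  shows "cart_adj (cycle_adj n) (cycle_adj m) (i, j) (i, j')"
  using assms by (auto simp: cart_adj_def cycle_adj_def)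

lemma cart_cycle_adj_horizontal:
  assumes "Suc i < n"
  shows "cart_adj (cycle_adj n) (cycle_adj m) (i, j) (Suc i, j)"
    and "cart_adj (cycle_adj n) (cycle_adj m) (Suc i, j) (i, j)"
  using assms by (auto simp: cart_adj_def cycle_adj_def)

definition torus_pairing_columns :: "nat \<Rightarrow> nat set" where
  "torus_pairing_columns n = {i. i < n \<and> even i} \<union> {n - 1}"

definition torus_pairing_row :: "nat \<Rightarrow> nat" where
  "torus_pairing_row i = (if 4 dvd i then 0 else 2)"

definition torus_pairing :: "nat \<Rightarrow> (nat \<times> nat) set set" where
  "torus_pairing n =
     column_pairs (torus_pairing_columns n) torus_pairing_row (\<lambda>i. Suc (torus_pairing_row i))"

lemma mem_Union_torus_pairing:
  "(i, j) \<in> \<Union>(torus_pairing n) \<longleftrightarrow>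
     i \<in> torus_pairing_columns n \<and> j \<in> {torus_pairing_row i, Suc (torus_pairing_row i)}"
  unfolding torus_pairing_def mem_Union_column_pairs by simp

lemma torus_pairing_row_cases: "torus_pairing_row i = 0 \<or> torus_pairing_row i = 2"
  by (simp add: torus_pairing_row_def)

lemma card_torus_pairing_columns:
  assumes "even n"
  shows "card (torus_pairing_columns n) \<le> n div 2 + 1"
proof -
  have "{i. i < n \<and> even i} \<subseteq> (\<lambda>k. 2 * k) ` {..<n div 2}"
    using \<open>even n\<close> by (auto elim!: evenE)
  then have "card {i. i < n \<and> even i} \<le> n div 2"
    using card_mono[OF _ \<open>_ \<subseteq> _\<close>] card_image_le[of "{..<n div 2}" "\<lambda>k. 2 * k"] by simp
  moreover have "card ({i. i < n \<and> even i} \<union> {n - 1}) \<le> card {i. i < n \<and> even i} + 1"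
    using card_Un_le[of _ "{n - 1}"] by simp
  ultimately show ?thesis
    unfolding torus_pairing_columns_def by linarith
qed

lemma torus_pairing_row_between:
  assumes "odd i" "j < 4"
  shows "j \<in> {torus_pairing_row (i - 1), Suc (torus_pairing_row (i - 1))}
       \<or> j \<in> {torus_pairing_row (Suc i), Suc (torus_pairing_row (Suc i))}"
proof -
  have "4 dvd i - 1 \<longleftrightarrow> \<not> 4 dvd Suc i"
    using \<open>odd i\<close> by presburger
  moreover have "j \<in> {0, 1} \<or> j \<in> {2, 3}"
    using \<open>j < 4\<close> by auto
  ultimately show ?thesis
    unfolding torus_pairing_row_def by auto
qed

lemma torus_pairing_row_vertical_neighbour:
  assumes "j < 4" "j \<notin> {torus_pairing_row i, Suc (torus_pairing_row i)}"
  obtains j' where "j' \<in> {torus_pairing_row i, Suc (torus_pairing_row i)}" "j' < 4"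
    "j' = Suc j mod 4 \<or> j = Suc j' mod 4"
proof -
  have "j \<in> {0, 1, 2, 3}"
    using \<open>j < 4\<close> by auto
  then show ?thesis
    using assms(2) that torus_pairing_row_cases[of i] by fastforce
qed

lemma torus_pairing_dominates:
  assumes "n mod 4 = 2" "i < n" "j < 4" "(i, j) \<notin> \<Union>(torus_pairing n)"
  shows "\<exists>u\<in>\<Union>(torus_pairing n). cart_adj (cycle_adj n) (cycle_adj 4) (i, j) u"
proof (cases "i \<in> torus_pairing_columns n")
  case True
  with assms(4) have "j \<notin> {torus_pairing_row i, Suc (torus_pairing_row i)}"
    unfolding mem_Union_torus_pairing by blast
  with \<open>j < 4\<close> obtain j' where "j' \<in> {torus_pairing_row i, Suc (torus_pairing_row i)}" "j' < 4"
    "j' = Suc j mod 4 \<or> j = Suc j' mod 4"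
    by (rule torus_pairing_row_vertical_neighbour)
  with True \<open>i < n\<close> \<open>j < 4\<close> show ?thesis
    by (metis mem_Union_torus_pairing cart_cycle_adj_vertical)
next
  case False
  with \<open>i < n\<close> have "odd i" "Suc i \<noteq> n"
    by (auto simp: torus_pairing_columns_def)
  with assms(1,2) have "0 < i" "Suc i < n" "even n"
    by presburger+
  with \<open>odd i\<close> have "i - 1 \<in> torus_pairing_columns n" "Suc i \<in> torus_pairing_columns n"
    by (auto simp: torus_pairing_columns_def)
  moreover have "cart_adj (cycle_adj n) (cycle_adj 4) (i, j) (i - 1, j)"
    using cart_cycle_adj_horizontal(2)[of "i - 1" n] \<open>0 < i\<close> \<open>i < n\<close> by simp
  moreover note cart_cycle_adj_horizontal(1)[OF \<open>Suc i < n\<close>]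
  ultimately show ?thesis
    using torus_pairing_row_between[OF \<open>odd i\<close> \<open>j < 4\<close>]
    by (metis mem_Union_torus_pairing)
qed

lemma paired_dominating_torus_pairing:
  assumes "n \<ge> 3" "n mod 4 = 2"
  shows "paired_dominating (cart_verts (cycle_verts n) (cycle_verts 4))
           (cart_adj (cycle_adj n) (cycle_adj 4)) (\<Union>(torus_pairing n))"
  unfolding paired_dominating_def
proof (intro conjI)
  have "torus_pairing_columns n \<subseteq> {..<n}"
    using assms(1) by (auto simp: torus_pairing_columns_def)
  then show "\<Union>(torus_pairing n) \<subseteq> cart_verts (cycle_verts n) (cycle_verts 4)"
    by (intro subrelI)
      (auto simp del: Union_iff simp: mem_Union_torus_pairing torus_pairing_row_def
        cart_verts_def cycle_verts_def)
  show "\<forall>v\<in>cart_verts (cycle_verts n) (cycle_verts 4) - \<Union>(torus_pairing n).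
          \<exists>u\<in>\<Union>(torus_pairing n). cart_adj (cycle_adj n) (cycle_adj 4) v u"
    using torus_pairing_dominates[OF assms(2)] by (auto simp: cart_verts_def cycle_verts_def)
  have row_edge: "cycle_adj 4 (torus_pairing_row i) (Suc (torus_pairing_row i))" for i
    using torus_pairing_row_cases[of i] by (auto simp: cycle_adj_def)
  show "\<exists>M. perfect_matching_induced (cart_adj (cycle_adj n) (cycle_adj 4))
                 (\<Union>(torus_pairing n)) M"
    unfolding torus_pairing_def by (rule exI, rule perfect_matching_column_pairs) (simp add: row_edge)
qed

lemma card_torus_pairing:
  assumes "even n"
  shows "card (\<Union>(torus_pairing n)) \<le> n + 2"
proof -
  have "card (\<Union>(torus_pairing n)) \<le> 2 * card (torus_pairing_columns n)"
    unfolding torus_pairing_def by (rule card_Union_column_pairs) (simp add: torus_pairing_columns_def)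
  also have "\<dots> \<le> n + 2"
    using card_torus_pairing_columns[OF assms] \<open>even n\<close> by (auto elim!: evenE)
  finally show ?thesis .
qed

theorem lemma4p2:
  fixes n :: nat
  assumes "n \<ge> 3" and "n mod 4 = 2"
  shows "gamma_t (cart_verts (cycle_verts n) (cycle_verts 4)) (cart_adj (cycle_adj n) (cycle_adj 4))
           \<le> gamma_p (cart_verts (cycle_verts n) (cycle_verts 4)) (cart_adj (cycle_adj n) (cycle_adj 4))
       \<and> gamma_p (cart_verts (cycle_verts n) (cycle_verts 4)) (cart_adj (cycle_adj n) (cycle_adj 4))
           \<le> n + 2"
proof
  let ?V = "cart_verts (cycle_verts n) (cycle_verts 4)"
  let ?E = "cart_adj (cycle_adj n) (cycle_adj 4)"
  have paired: "paired_dominating ?V ?E (\<Union>(torus_pairing n))"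
    using assms by (rule paired_dominating_torus_pairing)
  show "gamma_t ?V ?E \<le> gamma_p ?V ?E"
    using finite_cart_verts_cycle symp_cart_adj[OF symp_cycle_adj symp_cycle_adj] paired
    by (rule gamma_t_le_gamma_p)
  have "gamma_p ?V ?E \<le> card (\<Union>(torus_pairing n))"
    using finite_cart_verts_cycle paired by (rule gamma_p_le_card)
  also have "\<dots> \<le> n + 2"
    using assms(2) by (intro card_torus_pairing) presburger
  finally show "gamma_p ?V ?E \<le> n + 2" .
qed

end
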